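(* (Non-analyticity of the rotated-scheme strain Green operator along the line $L_{100}$.) Let $q_1\in\mathbb{R}$ with $q_1\notin\pi+2\pi\mathbb{Z}$, let $\theta\in\mathbb{R}$ and $n=(0,\cos\theta,\sin\theta)$. Then $$\lim_{\epsilon\to0^+}G^{rot}\big(q_1,\ \pi+\epsilon\sin\theta,\ \pi+\epsilon\cos\theta\big)=\Gamma(n).$$ In particular, if $\lambda^0$ is isotropic, $\lambda^0_{ijkl}=\lambda\delta_{ij}\delta_{kl}+\mu(\delta_{ik}\delta_{jl}+\delta_{il}\delta_{jk})$ with $\mu>0$, $3\lambda+2\mu>0$, and $\nu=\lambda/(2(\lambda+\mu))$, then $$\lim_{\epsilon\to0^+}G^{rot}_{2223}\big(q_1,\pi+\epsilon\sin\theta,\pi+\epsilon\cos\theta\big)=\frac{\cos\theta\sin\theta}{2\mu}\Big(1-\frac{\cos^2\theta}{1-\nu}\Big),$$ which depends on $\theta$; hence $G^{rot}_{2223}$ admits no continuous extension to any point $(q_1,\pi,\pi)$ with $q_1\notin\pi+2\pi\mathbb{Z}$.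
   Context: Rotated scheme: for $q\in\mathbb{R}^3$, $D^{rot}_1(q)=\frac14(e^{iq_1}-1)(e^{iq_2}+1)(e^{iq_3}+1)$, $D^{rot}_2(q)=\frac14(e^{iq_1}+1)(e^{iq_2}-1)(e^{iq_3}+1)$, $D^{rot}_3(q)=\frac14(e^{iq_1}+1)(e^{iq_2}+1)(e^{iq_3}-1)$. $\lambda^0$ is a constant fourth-order tensor with minor and major symmetries, positive definite on real symmetric matrices. $M^{rot}_{jk}(q)=\sum_{i,l}\overline{D^{rot}_i}\lambda^0_{ijkl}D^{rot}_l$, invertible whenever $D^{rot}(q)\ne0$, and $\Omega^{rot}(q)=M^{rot}(q)^{-1}$ there. Strain Green operator (defined where $D^{rot}(q)\neq 0$): $G^{rot}_{ijkl}=\frac14\{D_i\Omega_{jk}\overline{D_l}+D_j\Omega_{ik}\overline{D_l}+D_i\Omega_{jl}\overline{D_k}+D_j\Omega_{il}\overline{D_k}\}$ with $D=D^{rot}(q)$, $\Omega=\Omega^{rot}(q)$. For a nonzero real vector $n$, the acoustic tensor is $K(n)_{jk}=\sum_{i,l}\lambda^0_{ijkl}n_in_l$ and the continuum Green operator is $\Gamma_{ijkl}(n)=\frac14\{n_iK^{-1}_{jk}n_l+n_jK^{-1}_{ik}n_l+n_iK^{-1}_{jl}n_k+n_jK^{-1}_{il}n_k\}$ with $K^{-1}=K(n)^{-1}$. *)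

theory Defs
  imports "HOL-Analysis.Analysis"
begin

text \<open>Indices 1,2,3 are elements of the numeral type 3 (where the numeral 3 denotes
  the third index). Tensors are functions of four indices.\<close>

type_synonym tensor4 = "3 \<Rightarrow> 3 \<Rightarrow> 3 \<Rightarrow> 3 \<Rightarrow> real"

definition tensor_minor_sym :: "tensor4 \<Rightarrow> bool" where
  "tensor_minor_sym L \<longleftrightarrow> (\<forall>i j k l. L i j k l = L j i k l \<and> L i j k l = L i j l k)"

definition tensor_major_sym :: "tensor4 \<Rightarrow> bool" where
  "tensor_major_sym L \<longleftrightarrow> (\<forall>i j k l. L i j k l = L k l i j)"

definition tensor_pos_def_sym :: "tensor4 \<Rightarrow> bool" where
  "tensor_pos_def_sym L \<longleftrightarrow>
     (\<forall>e :: real^3^3. transpose e = e \<and> e \<noteq> 0 \<longrightarrow>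
        (\<Sum>i\<in>UNIV. \<Sum>j\<in>UNIV. \<Sum>k\<in>UNIV. \<Sum>l\<in>UNIV. e$i$j * L i j k l * e$k$l) > 0)"

definition Drot :: "real^3 \<Rightarrow> complex^3" where
  "Drot q = vector
     [ (exp (\<i> * of_real (q$1)) - 1) * (exp (\<i> * of_real (q$2)) + 1) * (exp (\<i> * of_real (q$3)) + 1) / 4,
       (exp (\<i> * of_real (q$1)) + 1) * (exp (\<i> * of_real (q$2)) - 1) * (exp (\<i> * of_real (q$3)) + 1) / 4,
       (exp (\<i> * of_real (q$1)) + 1) * (exp (\<i> * of_real (q$2)) + 1) * (exp (\<i> * of_real (q$3)) - 1) / 4 ]"

definition Mrot :: "tensor4 \<Rightarrow> real^3 \<Rightarrow> complex^3^3" where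
  "Mrot L q = (\<chi> j k. \<Sum>i\<in>UNIV. \<Sum>l\<in>UNIV. cnj (Drot q $ i) * of_real (L i j k l) * Drot q $ l)"

definition Omegarot :: "tensor4 \<Rightarrow> real^3 \<Rightarrow> complex^3^3" where
  "Omegarot L q = matrix_inv (Mrot L q)"

text \<open>Strain Green operator of the rotated scheme (meaningful where Drot q \<noteq> 0).\<close>
definition Grot :: "tensor4 \<Rightarrow> real^3 \<Rightarrow> 3 \<Rightarrow> 3 \<Rightarrow> 3 \<Rightarrow> 3 \<Rightarrow> complex" where
  "Grot L q i j k l =
     (let D = Drot q; \<Omega> = Omegarot L q in
      (D$i * \<Omega>$j$k * cnj (D$l) + D$j * \<Omega>$i$k * cnj (D$l)
       + D$i * \<Omega>$j$l * cnj (D$k) + D$j * \<Omega>$i$l * cnj (D$k)) / 4)"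

definition acoustic :: "tensor4 \<Rightarrow> real^3 \<Rightarrow> real^3^3" where
  "acoustic L n = (\<chi> j k. \<Sum>i\<in>UNIV. \<Sum>l\<in>UNIV. L i j k l * n$i * n$l)"

text \<open>Continuum Green operator (meaningful for n \<noteq> 0).\<close>
definition Gamma_op :: "tensor4 \<Rightarrow> real^3 \<Rightarrow> 3 \<Rightarrow> 3 \<Rightarrow> 3 \<Rightarrow> 3 \<Rightarrow> real" where
  "Gamma_op L n i j k l =
     (let Ki = matrix_inv (acoustic L n) in
      (n$i * Ki$j$k * n$l + n$j * Ki$i$k * n$l + n$i * Ki$j$l * n$k + n$j * Ki$i$l * n$k) / 4)"

definition isotropic_tensor :: "real \<Rightarrow> real \<Rightarrow> tensor4" where
  "isotropic_tensor lam mu = (\<lambda>i j k l.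
      lam * (if i = j then 1 else 0) * (if k = l then 1 else 0)
      + mu * ((if i = k then 1 else 0) * (if j = l then 1 else 0)
              + (if i = l then 1 else 0) * (if j = k then 1 else 0)))"

end

(*
  Along the line q = (q1, pi + e sin t, pi + e cos t) the factors e^{iq2} + 1 and e^{iq3} + 1 vanish
  to first order in e while e^{iq1} + 1 does not, so D^rot(q) = c e W(e) with a constant c \<noteq> 0 and
  W(e) \<rightarrow> n = (0, cos t, sin t).  The operator G^rot is homogeneous of degree zero in D, so along
  the line it equals the same expression in W(e); this expression is continuous at W = n because
  M(n) is the acoustic tensor K(n), which is invertible since v.K(n)v is a quarter of the elastic
  energy of the symmetric dyad n v + v n.  For isotropic stiffness
  the (2,2,2,3) component of Gamma(n) vanishes for t = 0 but not for t = pi/4, so G^rot_2223 has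
  no limit at (q1, pi, pi).
*)
theory Submission
  imports Defs
begin

lemma matrix_inv_eqI:
  fixes A B :: "'a::field^'n^'n"
  assumes "A ** B = mat 1"
  shows "matrix_inv A = B"
proof -
  have BA: "B ** A = mat 1" using assms matrix_left_right_inverse by blast
  have "A ** matrix_inv A = mat 1 \<and> matrix_inv A ** A = mat 1"
    unfolding matrix_inv_def using assms BA by (rule someI[of _ B, OF conjI])
  then have "matrix_inv A = (B ** A) ** matrix_inv A" using BA by simp
  also have "\<dots> = B" using \<open>_ \<and> _\<close> by (simp flip: matrix_mul_assoc)
  finally show ?thesis .
qed

lemma matrix_inv_right:
  fixes A :: "'a::field^'n^'n"
  assumes "det A \<noteq> 0"
  shows "A ** matrix_inv A = mat 1"
proof -
  obtain B where "A ** B = mat 1"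
    using assms invertible_det_nz invertible_right_inverse by blast
  then show ?thesis using matrix_inv_eqI by metis
qed

lemma matrix_inv_cramer:
  fixes A :: "'a::field^'n^'n"
  assumes "det A \<noteq> 0"
  shows "matrix_inv A $ j $ k = det (\<chi> a b. if b = j then (if a = k then 1 else 0) else A $ a $ b) / det A"
proof -
  let ?x = "\<chi> i. matrix_inv A $ i $ k" and ?e = "(\<chi> i. if i = k then 1 else 0) :: 'a^'n"
  have "A *v ?x = (\<chi> i. (A ** matrix_inv A) $ i $ k)"
    by (simp add: vec_eq_iff matrix_vector_mult_def matrix_matrix_mult_def)
  then have "A *v ?x = ?e"
    by (simp add: matrix_inv_right[OF assms] mat_def)
  then have "?x $ j = det (\<chi> a b. if b = j then ?e $ a else A $ a $ b) / det A"
    unfolding cramer[OF assms] by simp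
  then show ?thesis by (simp cong: if_cong)
qed

lemma tendsto_det:
  fixes A :: "'b \<Rightarrow> 'a::real_normed_field^'n^'n"
  assumes "\<And>i j. ((\<lambda>x. A x $ i $ j) \<longlongrightarrow> A0 $ i $ j) F"
  shows "((\<lambda>x. det (A x)) \<longlongrightarrow> det A0) F"
  unfolding det_def by (intro tendsto_intros assms)

lemma tendsto_matrix_inv:
  fixes A :: "'b \<Rightarrow> 'a::real_normed_field^'n^'n"
  assumes lim: "\<And>i j. ((\<lambda>x. A x $ i $ j) \<longlongrightarrow> A0 $ i $ j) F" and d: "det A0 \<noteq> 0"
  shows "((\<lambda>x. matrix_inv (A x) $ j $ k) \<longlongrightarrow> matrix_inv A0 $ j $ k) F"
proof -
  let ?C = "\<lambda>B::'a^'n^'n. \<chi> a b. if b = j then (if a = k then 1 else 0) else B $ a $ b"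
  have "((\<lambda>x. det (?C (A x)) / det (A x)) \<longlongrightarrow> det (?C A0) / det A0) F"
    by (intro tendsto_divide tendsto_det d) (auto intro: lim)
  moreover have "eventually (\<lambda>x. det (A x) \<noteq> 0) F"
    using tendsto_det[OF lim] d by (rule tendsto_imp_eventually_ne)
  then have "eventually (\<lambda>x. det (?C (A x)) / det (A x) = matrix_inv (A x) $ j $ k) F"
    by eventually_elim (simp add: matrix_inv_cramer)
  ultimately show ?thesis
    unfolding matrix_inv_cramer[OF d] by (rule Lim_transform_eventually)
qed

lemma matrix_inv_scale:
  fixes A :: "'a::field^'n^'n"
  assumes "det A \<noteq> 0" "r \<noteq> 0"
  shows "matrix_inv (\<chi> j k. r * A $ j $ k) = (\<chi> j k. matrix_inv A $ j $ k / r)"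
proof (rule matrix_inv_eqI)
  have "(\<chi> j k. r * A $ j $ k) ** (\<chi> j k. matrix_inv A $ j $ k / r) = A ** matrix_inv A"
    using assms(2) by (simp add: matrix_matrix_mult_def vec_eq_iff)
  then show "(\<chi> j k. r * A $ j $ k) ** (\<chi> j k. matrix_inv A $ j $ k / r) = mat 1"
    by (simp add: matrix_inv_right[OF assms(1)])
qed

lemma det_of_real:
  fixes K :: "real^'n^'n"
  shows "det (\<chi> j k. (of_real (K $ j $ k) :: 'a::{comm_ring_1,real_algebra_1})) = of_real (det K)"
  unfolding det_def by (simp add: of_real_sum of_real_prod)

lemma matrix_inv_of_real:
  fixes K :: "real^'n^'n"
  assumes "det K \<noteq> 0"
  shows "matrix_inv (\<chi> j k. (of_real (K $ j $ k) :: 'a::{field,real_algebra_1})) =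
    (\<chi> j k. of_real (matrix_inv K $ j $ k))"
proof (rule matrix_inv_eqI)
  have "(\<chi> j k. (of_real (K $ j $ k) :: 'a)) ** (\<chi> j k. of_real (matrix_inv K $ j $ k)) =
      (\<chi> j k. of_real ((K ** matrix_inv K) $ j $ k))"
    by (simp add: matrix_matrix_mult_def vec_eq_iff)
  then show "(\<chi> j k. (of_real (K $ j $ k) :: 'a)) ** (\<chi> j k. of_real (matrix_inv K $ j $ k)) = mat 1"
    by (simp add: matrix_inv_right[OF assms] mat_def vec_eq_iff)
qed

definition tensor_form :: "tensor4 \<Rightarrow> real^3 \<Rightarrow> real^3 \<Rightarrow> real^3 \<Rightarrow> real^3 \<Rightarrow> real" where
  "tensor_form L a b c d =
    (\<Sum>i\<in>UNIV. \<Sum>j\<in>UNIV. \<Sum>k\<in>UNIV. \<Sum>l\<in>UNIV. a$i * b$j * L i j k l * c$k * d$l)"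

lemma tensor_form_swap_left:
  assumes "tensor_minor_sym L"
  shows "tensor_form L a b c d = tensor_form L b a c d"
proof -
  have sym: "L i j k l = L j i k l" for i j k l
    using assms unfolding tensor_minor_sym_def by blast
  have "tensor_form L a b c d =
      (\<Sum>j\<in>UNIV. \<Sum>i\<in>UNIV. \<Sum>k\<in>UNIV. \<Sum>l\<in>UNIV. a$i * b$j * L i j k l * c$k * d$l)"
    unfolding tensor_form_def by (rule sum.swap)
  also have "\<dots> = tensor_form L b a c d"
    unfolding tensor_form_def by (intro sum.cong refl) (subst sym, simp add: mult_ac)
  finally show ?thesis .
qed

lemma tensor_form_swap_right:
  assumes "tensor_minor_sym L"
  shows "tensor_form L a b c d = tensor_form L a b d c"
proof -
  have sym: "L i j k l = L i j l k" for i j k l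
    using assms unfolding tensor_minor_sym_def by blast
  have "tensor_form L a b c d =
      (\<Sum>i\<in>UNIV. \<Sum>j\<in>UNIV. \<Sum>l\<in>UNIV. \<Sum>k\<in>UNIV. a$i * b$j * L i j k l * c$k * d$l)"
    unfolding tensor_form_def by (intro sum.cong refl sum.swap)
  also have "\<dots> = tensor_form L a b d c"
    unfolding tensor_form_def by (intro sum.cong refl) (subst sym, simp add: mult_ac)
  finally show ?thesis .
qed

lemma inner_acoustic_eq_tensor_form:
  "v \<bullet> (acoustic L n *v v) = tensor_form L n v v n"
proof -
  have "v \<bullet> (acoustic L n *v v) =
      (\<Sum>j\<in>UNIV. \<Sum>k\<in>UNIV. \<Sum>i\<in>UNIV. \<Sum>l\<in>UNIV. n$i * v$j * L i j k l * v$k * n$l)"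
    unfolding acoustic_def inner_vec_def matrix_vector_mult_def
    by (simp add: sum_distrib_left sum_distrib_right mult_ac)
  also have "\<dots> = (\<Sum>j\<in>UNIV. \<Sum>i\<in>UNIV. \<Sum>k\<in>UNIV. \<Sum>l\<in>UNIV. n$i * v$j * L i j k l * v$k * n$l)"
    by (intro sum.cong refl sum.swap)
  also have "\<dots> = tensor_form L n v v n"
    unfolding tensor_form_def by (rule sum.swap)
  finally show ?thesis .
qed

lemma elastic_energy_sym_dyad:
  fixes n v :: "real^3"
  assumes "tensor_minor_sym L"
  defines "e \<equiv> \<chi> i j. n$i * v$j + n$j * v$i"
  shows "(\<Sum>i\<in>UNIV. \<Sum>j\<in>UNIV. \<Sum>k\<in>UNIV. \<Sum>l\<in>UNIV. e$i$j * L i j k l * e$k$l) =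
    4 * (v \<bullet> (acoustic L n *v v))"
proof -
  have "(\<Sum>i\<in>UNIV. \<Sum>j\<in>UNIV. \<Sum>k\<in>UNIV. \<Sum>l\<in>UNIV. e$i$j * L i j k l * e$k$l) =
      tensor_form L n v n v + tensor_form L n v v n + tensor_form L v n n v + tensor_form L v n v n"
    unfolding e_def tensor_form_def by (simp add: distrib_left distrib_right sum.distrib mult_ac)
  also have "\<dots> = 4 * tensor_form L n v v n"
    using tensor_form_swap_left[OF assms(1), of v n] tensor_form_swap_right[OF assms(1), of n v] by simp
  finally show ?thesis by (simp add: inner_acoustic_eq_tensor_form)
qed

lemma sym_dyad_nonzero:
  fixes n v :: "real^'n"
  assumes "n \<noteq> 0" "v \<noteq> 0"
  shows "(\<chi> i j. n$i * v$j + n$j * v$i) \<noteq> (0 :: real^'n^'n)"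
proof
  assume e0: "(\<chi> i j. n$i * v$j + n$j * v$i) = (0 :: real^'n^'n)"
  have e: "n$i * v$j + n$j * v$i = 0" for i j
    using arg_cong[OF e0, of "\<lambda>A. A $ i $ j"] by simp
  obtain i where ni: "n$i \<noteq> 0" using assms(1) by (metis vec_eq_iff zero_index)
  have "v$i = 0" using e[of i i] ni by simp
  then have "v$j = 0" for j using e[of i j] ni by simp
  then show False using assms(2) by (simp add: vec_eq_iff)
qed

lemma acoustic_pos_def:
  assumes "tensor_minor_sym L" "tensor_pos_def_sym L" "n \<noteq> 0" "v \<noteq> 0"
  shows "v \<bullet> (acoustic L n *v v) > 0"
proof -
  let ?e = "(\<chi> i j. n$i * v$j + n$j * v$i) :: real^3^3"
  have "transpose ?e = ?e" by (simp add: transpose_def vec_eq_iff add.commute)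
  then have "(\<Sum>i\<in>UNIV. \<Sum>j\<in>UNIV. \<Sum>k\<in>UNIV. \<Sum>l\<in>UNIV. ?e$i$j * L i j k l * ?e$k$l) > 0"
    using assms(2) sym_dyad_nonzero[OF assms(3,4)] unfolding tensor_pos_def_sym_def by blast
  then show ?thesis unfolding elastic_energy_sym_dyad[OF assms(1)] by simp
qed

lemma det_acoustic_nonzero:
  assumes "tensor_minor_sym L" "tensor_pos_def_sym L" "n \<noteq> 0"
  shows "det (acoustic L n) \<noteq> 0"
proof -
  have "v = 0" if "acoustic L n *v v = 0" for v
  proof (rule ccontr)
    assume "v \<noteq> 0"
    with acoustic_pos_def[OF assms] have "v \<bullet> (acoustic L n *v v) > 0" by blast
    with that show False by simp
  qed
  then have "\<exists>B. B ** acoustic L n = mat 1" unfolding matrix_left_invertible_ker by blast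
  then show ?thesis using invertible_det_nz invertible_left_inverse by blast
qed

definition hermitian_acoustic :: "tensor4 \<Rightarrow> complex^3 \<Rightarrow> complex^3^3" where
  "hermitian_acoustic L W = (\<chi> j k. \<Sum>i\<in>UNIV. \<Sum>l\<in>UNIV. cnj (W$i) * of_real (L i j k l) * W$l)"

definition green_op :: "tensor4 \<Rightarrow> complex^3 \<Rightarrow> 3 \<Rightarrow> 3 \<Rightarrow> 3 \<Rightarrow> 3 \<Rightarrow> complex" where
  "green_op L W i j k l =
     (let \<Omega> = matrix_inv (hermitian_acoustic L W) in
      (W$i * \<Omega>$j$k * cnj (W$l) + W$j * \<Omega>$i$k * cnj (W$l)
       + W$i * \<Omega>$j$l * cnj (W$k) + W$j * \<Omega>$i$l * cnj (W$k)) / 4)"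

lemma Grot_eq_green_op: "Grot L q i j k l = green_op L (Drot q) i j k l"
  unfolding Grot_def green_op_def Omegarot_def Mrot_def hermitian_acoustic_def Let_def ..

lemma green_op_scale:
  assumes "c \<noteq> 0" "det (hermitian_acoustic L W) \<noteq> 0"
  shows "green_op L (\<chi> m. c * W$m) i j k l = green_op L W i j k l"
proof -
  have "hermitian_acoustic L (\<chi> m. c * W$m) = (\<chi> j k. (cnj c * c) * hermitian_acoustic L W $ j $ k)"
    unfolding hermitian_acoustic_def by (simp add: vec_eq_iff sum_distrib_left mult_ac)
  then have "matrix_inv (hermitian_acoustic L (\<chi> m. c * W$m)) =
      (\<chi> j k. matrix_inv (hermitian_acoustic L W) $ j $ k / (cnj c * c))"
    using assms by (simp add: matrix_inv_scale)
  then show ?thesis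
    unfolding green_op_def Let_def using assms(1) by (simp add: field_simps)
qed

lemma hermitian_acoustic_of_real:
  "hermitian_acoustic L (\<chi> m. of_real (n$m)) = (\<chi> j k. of_real (acoustic L n $ j $ k))"
  unfolding hermitian_acoustic_def acoustic_def by (simp add: vec_eq_iff mult_ac)

lemma tendsto_hermitian_acoustic:
  assumes "\<And>m. ((\<lambda>x. W x $ m) \<longlongrightarrow> W0 $ m) F"
  shows "((\<lambda>x. hermitian_acoustic L (W x) $ j $ k) \<longlongrightarrow> hermitian_acoustic L W0 $ j $ k) F"
  unfolding hermitian_acoustic_def by (auto intro!: tendsto_intros assms)

lemma tendsto_green_op:
  assumes W: "\<And>m. ((\<lambda>x. W x $ m) \<longlongrightarrow> W0 $ m) F"
    and d: "det (hermitian_acoustic L W0) \<noteq> 0"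
  shows "((\<lambda>x. green_op L (W x) i j k l) \<longlongrightarrow> green_op L W0 i j k l) F"
proof -
  have inv: "((\<lambda>x. matrix_inv (hermitian_acoustic L (W x)) $ a $ b)
      \<longlongrightarrow> matrix_inv (hermitian_acoustic L W0) $ a $ b) F" for a b
    using tendsto_hermitian_acoustic[OF W] d by (rule tendsto_matrix_inv)
  show ?thesis
    unfolding green_op_def Let_def by (intro tendsto_intros W inv) simp
qed

lemma green_op_of_real:
  assumes "det (acoustic L n) \<noteq> 0"
  shows "green_op L (\<chi> m. of_real (n$m)) i j k l = of_real (Gamma_op L n i j k l)"
  unfolding green_op_def Gamma_op_def Let_def hermitian_acoustic_of_real
  by (simp add: matrix_inv_of_real[OF assms])

lemma exp_i_pi_add: "exp (\<i> * of_real (pi + x)) = - exp (\<i> * of_real x)"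
  by (simp add: distrib_left exp_add)

lemma tendsto_exp_i_diff_quotient:
  "((\<lambda>t::real. (exp (\<i> * of_real (t * s)) - 1) / of_real t) \<longlongrightarrow> \<i> * of_real s) (at 0)"
proof -
  have "((\<lambda>y. exp (\<i> * (y * of_real s))) has_field_derivative \<i> * of_real s) (at 0)"
    by (auto intro!: derivative_eq_intros)
  then have "((\<lambda>y. (exp (\<i> * (y * of_real s)) - 1) / y) \<longlongrightarrow> \<i> * of_real s) (at 0)"
    unfolding has_field_derivative_iff by simp
  moreover have "filterlim (\<lambda>t::real. complex_of_real t) (at 0) (at 0)"
    by (rule filterlim_atI) (auto intro!: tendsto_eq_intros simp: eventually_at_filter)
  ultimately show ?thesis
    using filterlim_compose by (fastforce simp: o_def)
qed

lemma exp_i_plus_one_nonzero: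
  assumes "\<forall>m::int. q1 \<noteq> pi + 2 * pi * of_int m"
  shows "exp (\<i> * of_real q1) + 1 \<noteq> 0"
proof
  assume "exp (\<i> * of_real q1) + 1 = 0"
  then have "Re (exp (\<i> * of_real q1)) = -1"
    by (simp add: add_eq_0_iff2)
  then have "cos q1 = -1"
    by (simp add: Re_exp)
  then obtain m :: int where "q1 = (2 * of_int m + 1) * pi"
    using cos_eq_minus1 by blast
  then have "q1 = pi + 2 * pi * of_int m" by (simp add: algebra_simps)
  with assms show False by blast
qed

lemma tendsto_Drot_scaled_line:
  fixes q1 \<theta> :: real
  assumes "exp (\<i> * of_real q1) + 1 \<noteq> 0"
  defines "c \<equiv> (exp (\<i> * of_real q1) + 1) * \<i> / 2"
  shows "((\<lambda>\<epsilon>. Drot (vector [q1, pi + \<epsilon> * sin \<theta>, pi + \<epsilon> * cos \<theta>]) $ m / (c * of_real \<epsilon>))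
    \<longlongrightarrow> of_real (vector [0, cos \<theta>, sin \<theta>] $ m)) (at 0)"
proof -
  let ?z = "exp (\<i> * of_real q1)"
  define E where "E s \<epsilon> = exp (\<i> * of_real (\<epsilon> * s))" for s \<epsilon> :: real
  define Q where "Q s \<epsilon> = (E s \<epsilon> - 1) / of_real \<epsilon>" for s \<epsilon> :: real
  have E: "(E s \<longlongrightarrow> 1) (at 0)" for s
    unfolding E_def by (auto intro!: tendsto_eq_intros)
  have Q: "(Q s \<longlongrightarrow> \<i> * of_real s) (at 0)" for s
    unfolding Q_def E_def by (rule tendsto_exp_i_diff_quotient)
  have c: "c \<noteq> 0" using assms(1) unfolding c_def by simp
  have D: "(\<chi> m. Drot (vector [q1, pi + \<epsilon> * sin \<theta>, pi + \<epsilon> * cos \<theta>]) $ m / (c * of_real \<epsilon>)) = vector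
      [ (?z - 1) / (4 * c) * - Q (sin \<theta>) \<epsilon> * (1 - E (cos \<theta>) \<epsilon>),
        (?z + 1) / (4 * c) * (- E (sin \<theta>) \<epsilon> - 1) * - Q (cos \<theta>) \<epsilon>,
        (?z + 1) / (4 * c) * - Q (sin \<theta>) \<epsilon> * (- E (cos \<theta>) \<epsilon> - 1) ]" for \<epsilon>
  proof (cases "\<epsilon> = 0") \<comment> \<open>at \<open>\<epsilon> = 0\<close> both sides are 0, as \<open>x / 0 = 0\<close>\<close>
    case False
    with c show ?thesis
      unfolding Drot_def E_def Q_def vec_eq_iff forall_3 vector_3 vec_lambda_beta exp_i_pi_add
      by (simp add: field_simps)
  qed (simp add: Q_def vec_eq_iff forall_3)
  have "w / (4 * (w * \<i> / 2)) = - \<i> / 2" if "w \<noteq> 0" for w :: complex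
    using that by (simp add: field_simps)
  then have zc: "(?z + 1) / (4 * c) = - \<i> / 2"
    unfolding c_def using assms(1) by blast
  have "\<forall>m. ((\<lambda>\<epsilon>. (\<chi> m. Drot (vector [q1, pi + \<epsilon> * sin \<theta>, pi + \<epsilon> * cos \<theta>]) $ m / (c * of_real \<epsilon>)) $ m)
      \<longlongrightarrow> of_real (vector [0, cos \<theta>, sin \<theta>] $ m)) (at 0)"
    unfolding D forall_3 vector_3 using c
    by (auto intro!: tendsto_eq_intros E Q simp: zc)
  then show ?thesis by simp
qed

lemma vector_0_cos_sin_nonzero: "vector [0, cos \<theta>, sin \<theta>] \<noteq> (0::real^3)"
proof
  assume "vector [0, cos \<theta>, sin \<theta>] = (0::real^3)"
  then have "cos \<theta> = 0 \<and> sin \<theta> = 0" by (simp add: vec_eq_iff forall_3)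
  with sin_cos_squared_add[of \<theta>] show False by simp
qed

lemma eventually_Drot_line_nonzero:
  assumes "exp (\<i> * of_real q1) + 1 \<noteq> 0"
  shows "eventually (\<lambda>\<epsilon>. Drot (vector [q1, pi + \<epsilon> * sin \<theta>, pi + \<epsilon> * cos \<theta>]) \<noteq> 0) (at 0)"
proof -
  let ?c = "(exp (\<i> * of_real q1) + 1) * \<i> / 2"
  obtain m :: 3 where "vector [0, cos \<theta>, sin \<theta>] $ m \<noteq> (0::real)"
    using vector_0_cos_sin_nonzero[of \<theta>] by (metis vec_eq_iff zero_index)
  then have "eventually (\<lambda>\<epsilon>. Drot (vector [q1, pi + \<epsilon> * sin \<theta>, pi + \<epsilon> * cos \<theta>]) $ m / (?c * of_real \<epsilon>) \<noteq> 0) (at 0)"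
    using assms by (intro tendsto_imp_eventually_ne[OF tendsto_Drot_scaled_line]) simp_all
  then show ?thesis
    by eventually_elim auto
qed

lemma tendsto_Grot_line:
  assumes "tensor_minor_sym L" "tensor_pos_def_sym L" "exp (\<i> * of_real q1) + 1 \<noteq> 0"
  shows "((\<lambda>\<epsilon>. Grot L (vector [q1, pi + \<epsilon> * sin \<theta>, pi + \<epsilon> * cos \<theta>]) i j k l)
    \<longlongrightarrow> of_real (Gamma_op L (vector [0, cos \<theta>, sin \<theta>]) i j k l)) (at 0)"
proof -
  define c where "c = (exp (\<i> * of_real q1) + 1) * \<i> / 2"
  define n :: "real^3" where "n = vector [0, cos \<theta>, sin \<theta>]"
  define W where "W \<epsilon> = (\<chi> m. Drot (vector [q1, pi + \<epsilon> * sin \<theta>, pi + \<epsilon> * cos \<theta>]) $ m / (c * of_real \<epsilon>))"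
    for \<epsilon> :: real
  define W0 :: "complex^3" where "W0 = (\<chi> m. of_real (n $ m))"
  have c: "c \<noteq> 0" using assms(3) unfolding c_def by simp
  have W: "((\<lambda>\<epsilon>. W \<epsilon> $ m) \<longlongrightarrow> W0 $ m) (at 0)" for m
    using tendsto_Drot_scaled_line[OF assms(3), folded c_def]
    unfolding W_def W0_def n_def by simp
  have dK: "det (acoustic L n) \<noteq> 0"
    unfolding n_def using assms(1,2) vector_0_cos_sin_nonzero by (rule det_acoustic_nonzero)
  then have d0: "det (hermitian_acoustic L W0) \<noteq> 0"
    unfolding W0_def hermitian_acoustic_of_real det_of_real by simp
  have "eventually (\<lambda>\<epsilon>. det (hermitian_acoustic L (W \<epsilon>)) \<noteq> 0) (at 0)"
    using tendsto_det[OF tendsto_hermitian_acoustic[OF W]] d0 by (rule tendsto_imp_eventually_ne)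
  then have "eventually (\<lambda>\<epsilon>. green_op L (W \<epsilon>) i j k l =
      Grot L (vector [q1, pi + \<epsilon> * sin \<theta>, pi + \<epsilon> * cos \<theta>]) i j k l) (at 0)"
    using eventually_neq_at_within[of 0 0]
  proof eventually_elim
    case (elim \<epsilon>)
    then have "c * of_real \<epsilon> \<noteq> 0" using c by simp
    then have "Drot (vector [q1, pi + \<epsilon> * sin \<theta>, pi + \<epsilon> * cos \<theta>]) = (\<chi> m. (c * of_real \<epsilon>) * W \<epsilon> $ m)"
      unfolding W_def by (simp add: vec_eq_iff)
    with elim \<open>c * of_real \<epsilon> \<noteq> 0\<close> show ?case
      by (simp add: Grot_eq_green_op green_op_scale)
  qed
  moreover have "((\<lambda>\<epsilon>. green_op L (W \<epsilon>) i j k l) \<longlongrightarrow> of_real (Gamma_op L n i j k l)) (at 0)"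
    using tendsto_green_op[OF W d0] unfolding W0_def green_op_of_real[OF dK] .
  ultimately show ?thesis
    unfolding n_def by (rule Lim_transform_eventually[rotated])
qed

lemma filterlim_line_at_within_Drot_nonzero:
  assumes "exp (\<i> * of_real q1) + 1 \<noteq> 0"
  shows "filterlim (\<lambda>\<epsilon>. vector [q1, pi + \<epsilon> * sin \<theta>, pi + \<epsilon> * cos \<theta>])
    (at (vector [q1, pi, pi]) within {q. Drot q \<noteq> 0}) (at 0)"
proof (rule filterlim_at_withinI)
  have "\<forall>m. ((\<lambda>\<epsilon>. (vector [q1, pi + \<epsilon> * sin \<theta>, pi + \<epsilon> * cos \<theta>] :: real^3) $ m)
      \<longlongrightarrow> (vector [q1, pi, pi] :: real^3) $ m) (at 0)"
    unfolding forall_3 vector_3 by (auto intro!: tendsto_eq_intros)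
  then show "filterlim (\<lambda>\<epsilon>. vector [q1, pi + \<epsilon> * sin \<theta>, pi + \<epsilon> * cos \<theta>])
      (nhds (vector [q1, pi, pi] :: real^3)) (at 0)"
    by (intro vec_tendstoI) simp
  show "eventually (\<lambda>\<epsilon>. vector [q1, pi + \<epsilon> * sin \<theta>, pi + \<epsilon> * cos \<theta>]
      \<in> {q. Drot q \<noteq> 0} - {vector [q1, pi, pi]}) (at 0)"
    using eventually_Drot_line_nonzero[OF assms, of \<theta>] eventually_neq_at_within[of 0 0]
  proof eventually_elim
    case (elim \<epsilon>)
    have "vector [q1, pi + \<epsilon> * sin \<theta>, pi + \<epsilon> * cos \<theta>] \<noteq> (vector [q1, pi, pi] :: real^3)"
    proof
      assume "vector [q1, pi + \<epsilon> * sin \<theta>, pi + \<epsilon> * cos \<theta>] = (vector [q1, pi, pi] :: real^3)"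
      then have "sin \<theta> = 0 \<and> cos \<theta> = 0" using elim by (simp add: vec_eq_iff forall_3)
      with sin_cos_squared_add[of \<theta>] show False by simp
    qed
    with elim show ?case by simp
  qed
qed

lemma acoustic_isotropic:
  "acoustic (isotropic_tensor lam mu) n =
    (\<chi> j k. mu * (n \<bullet> n) * (if j = k then 1 else 0) + (lam + mu) * n$j * n$k)"
  unfolding acoustic_def isotropic_tensor_def inner_vec_def vec_eq_iff forall_3 sum_3
  by (simp add: algebra_simps power2_eq_square)

lemma matrix_inv_acoustic_isotropic:
  assumes "n \<bullet> n = 1" "mu \<noteq> 0" "lam + 2 * mu \<noteq> 0"
  shows "matrix_inv (acoustic (isotropic_tensor lam mu) n) =
    (\<chi> j k. ((if j = k then 1 else 0) - (lam + mu) / (lam + 2 * mu) * n$j * n$k) / mu)"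
proof (rule matrix_inv_eqI)
  define a where "a = (lam + mu) / (lam + 2 * mu)"
  have a: "a * (lam + 2 * mu) = lam + mu" unfolding a_def using assms(3) by simp
  have nn: "n$1 * n$1 + n$2 * n$2 + n$3 * n$3 = 1" using assms(1) by (simp add: inner_vec_def sum_3)
  show "acoustic (isotropic_tensor lam mu) n **
      (\<chi> j k. ((if j = k then 1 else 0) - (lam + mu) / (lam + 2 * mu) * n$j * n$k) / mu) = mat 1"
    unfolding acoustic_isotropic assms(1) a_def[symmetric] matrix_matrix_mult_def mat_def vec_eq_iff forall_3 sum_3
    using assms(2) by (simp add: field_simps) (use nn a in algebra)
qed

lemma Gamma_op_isotropic_2223:
  assumes "n \<bullet> n = 1" "mu > 0" "3 * lam + 2 * mu > 0"
  shows "Gamma_op (isotropic_tensor lam mu) n 2 2 2 3 =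
    n$2 * n$3 / (2 * mu) * (1 - (n$2)^2 / (1 - lam / (2 * (lam + mu))))"
proof -
  define a where "a = (lam + mu) / (lam + 2 * mu)"
  have l1: "lam + mu > 0" and l2: "lam + 2 * mu > 0" using assms(2,3) by linarith+
  have "matrix_inv (acoustic (isotropic_tensor lam mu) n) =
      (\<chi> j k. ((if j = k then 1 else 0) - a * n$j * n$k) / mu)"
    unfolding a_def using assms(1,2) l2 by (intro matrix_inv_acoustic_isotropic) auto
  then have "Gamma_op (isotropic_tensor lam mu) n 2 2 2 3 = n$2 * n$3 * (1 - 2 * a * (n$2)^2) / (2 * mu)"
    using assms(2) unfolding Gamma_op_def Let_def by (simp add: field_simps power2_eq_square)
  moreover have "(n$2)^2 / (1 - lam / (2 * (lam + mu))) = 2 * a * (n$2)^2"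
    unfolding a_def using l1 l2 by (simp add: field_simps)
  ultimately show ?thesis by (simp add: field_simps)
qed

lemma no_limit_Grot_at_line_point:
  assumes "tensor_minor_sym L" "tensor_pos_def_sym L" "exp (\<i> * of_real q1) + 1 \<noteq> 0"
    and "Gamma_op L (vector [0, cos \<theta>1, sin \<theta>1]) i j k l \<noteq> Gamma_op L (vector [0, cos \<theta>2, sin \<theta>2]) i j k l"
  shows "\<not> (\<exists>c. ((\<lambda>q. Grot L q i j k l) \<longlongrightarrow> c) (at (vector [q1, pi, pi]) within {q. Drot q \<noteq> 0}))"
proof
  assume "\<exists>c. ((\<lambda>q. Grot L q i j k l) \<longlongrightarrow> c) (at (vector [q1, pi, pi]) within {q. Drot q \<noteq> 0})"
  then obtain c where c: "((\<lambda>q. Grot L q i j k l) \<longlongrightarrow> c) (at (vector [q1, pi, pi]) within {q. Drot q \<noteq> 0})"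
    by blast
  have "c = of_real (Gamma_op L (vector [0, cos \<theta>, sin \<theta>]) i j k l)" for \<theta>
  proof (rule tendsto_unique)
    show "((\<lambda>\<epsilon>. Grot L (vector [q1, pi + \<epsilon> * sin \<theta>, pi + \<epsilon> * cos \<theta>]) i j k l) \<longlongrightarrow> c) (at 0)"
      using filterlim_compose[OF c filterlim_line_at_within_Drot_nonzero[OF assms(3)]] by simp
  qed (use tendsto_Grot_line[OF assms(1-3)] in auto)
  with assms(4) show False by (metis of_real_eq_iff)
qed

theorem mainTheorem10:
  fixes L :: tensor4 and q1 \<theta> :: real
  assumes minor: "tensor_minor_sym L"
    and major: "tensor_major_sym L"
    and posdef: "tensor_pos_def_sym L"
    and q1: "\<forall>m::int. q1 \<noteq> pi + 2 * pi * of_int m"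
  shows "(\<forall>i j k l.
           ((\<lambda>\<epsilon>. Grot L (vector [q1, pi + \<epsilon> * sin \<theta>, pi + \<epsilon> * cos \<theta>]) i j k l)
             \<longlongrightarrow> complex_of_real (Gamma_op L (vector [0, cos \<theta>, sin \<theta>]) i j k l)) (at_right 0))
       \<and> (\<forall>lam mu. mu > 0 \<longrightarrow> 3 * lam + 2 * mu > 0 \<longrightarrow> L = isotropic_tensor lam mu \<longrightarrow>
           (let \<nu> = lam / (2 * (lam + mu)) in
             ((\<lambda>\<epsilon>. Grot L (vector [q1, pi + \<epsilon> * sin \<theta>, pi + \<epsilon> * cos \<theta>]) 2 2 2 3)
               \<longlongrightarrow> complex_of_real (cos \<theta> * sin \<theta> / (2 * mu) * (1 - (cos \<theta>)^2 / (1 - \<nu>))))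
               (at_right 0))
           \<and> \<not> (\<exists>c. ((\<lambda>q. Grot L q 2 2 2 3) \<longlongrightarrow> c)
                    (at (vector [q1, pi, pi]) within {q. Drot q \<noteq> 0})))"
proof -
  have z: "exp (\<i> * of_real q1) + 1 \<noteq> 0" using q1 by (rule exp_i_plus_one_nonzero)
  have lim: "((\<lambda>\<epsilon>. Grot L (vector [q1, pi + \<epsilon> * sin t, pi + \<epsilon> * cos t]) i j k l)
      \<longlongrightarrow> of_real (Gamma_op L (vector [0, cos t, sin t]) i j k l)) (at_right 0)" for t i j k l
    by (rule tendsto_mono[OF at_le[OF subset_UNIV] tendsto_Grot_line[OF minor posdef z]])
  show ?thesis
  proof (intro conjI allI impI)
    fix lam mu :: real
    assume mu: "mu > 0" and l: "3 * lam + 2 * mu > 0" and iso: "L = isotropic_tensor lam mu"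
    have "(vector [0, cos t, sin t] :: real^3) \<bullet> vector [0, cos t, sin t] = 1" for t
      by (simp add: inner_vec_def sum_3 power2_eq_square[symmetric])
    then have G: "Gamma_op L (vector [0, cos t, sin t]) 2 2 2 3 =
        cos t * sin t / (2 * mu) * (1 - (cos t)^2 / (1 - lam / (2 * (lam + mu))))" for t
      unfolding iso using mu l by (simp add: Gamma_op_isotropic_2223)
    show "let \<nu> = lam / (2 * (lam + mu)) in
        ((\<lambda>\<epsilon>. Grot L (vector [q1, pi + \<epsilon> * sin \<theta>, pi + \<epsilon> * cos \<theta>]) 2 2 2 3)
          \<longlongrightarrow> of_real (cos \<theta> * sin \<theta> / (2 * mu) * (1 - (cos \<theta>)^2 / (1 - \<nu>)))) (at_right 0)"
      using lim[of \<theta> 2 2 2 3] by (simp add: G)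
    have "Gamma_op L (vector [0, cos 0, sin 0]) 2 2 2 3 \<noteq> Gamma_op L (vector [0, cos (pi/4), sin (pi/4)]) 2 2 2 3"
      using mu l unfolding G by (simp add: cos_45 sin_45 power_divide field_simps)
    then show "\<not> (\<exists>c. ((\<lambda>q. Grot L q 2 2 2 3) \<longlongrightarrow> c) (at (vector [q1, pi, pi]) within {q. Drot q \<noteq> 0}))"
      by (rule no_limit_Grot_at_line_point[OF minor posdef z])
  qed (use lim in simp)
qed

end
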